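(* Let $(x^1,x^2,z)$ be coordinates, $a,b\in\{1,2\}$, let $g_{ab}$ be functions of $(x^1,x^2,z)$ forming a positive definite matrix with $(\det g_{ab})_{,z}=0$, let $\beta_a$ be functions with $\beta_{a,z}=0$, and let $c$ be a constant. Then the data $$g=(dz+\beta_adx^a)^2+g_{ab}dx^adx^b,\qquad T^{ij}=c\big(\delta^i_z\delta^j_z-\tfrac13g^{ij}\big)$$ satisfy the momentum constraint $\nabla_iT^{ij}=0$ and $H=0$.
   Context: Initial data: Riemannian metric $g_{ij}$ and symmetric tensor $K_{ij}$; $H=g^{ij}K_{ij}$, $T^{ij}=K^{ij}-Hg^{ij}$ (so $K^{ij}=T^{ij}-\frac12(g_{kl}T^{kl})g^{ij}$). Momentum constraint: $\nabla_iT^{ij}=0$. *)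

theory Defs
  imports "HOL-Analysis.Analysis"
begin

text \<open>Coordinates on R^3: index 1 = x^1, index 2 = x^2, index 3 = z
  (indices live in the numeral type 3).\<close>

definition zidx :: 3 where "zidx = 3"

definition pd :: "(real^3 \<Rightarrow> real) \<Rightarrow> 3 \<Rightarrow> real^3 \<Rightarrow> real" where
  "pd f k p = deriv (\<lambda>t. f (p + t *\<^sub>R axis k 1)) 0"

definition idx2 :: "3 \<Rightarrow> 2" where "idx2 i = (if i = 1 then 1 else 2)"

text \<open>The metric g = (dz + beta_a dx^a)^2 + g_ab dx^a dx^b as a 3x3 matrix field.\<close>
definition kk_metric :: "(real^3 \<Rightarrow> real^2^2) \<Rightarrow> (real^3 \<Rightarrow> real^2) \<Rightarrow> real^3 \<Rightarrow> real^3^3" where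
  "kk_metric h \<beta> p = (\<chi> i j.
     (if i = zidx then 1 else \<beta> p $ idx2 i) * (if j = zidx then 1 else \<beta> p $ idx2 j)
     + (if i \<noteq> zidx \<and> j \<noteq> zidx then h p $ idx2 i $ idx2 j else 0))"

definition inv_metric :: "(real^3 \<Rightarrow> real^3^3) \<Rightarrow> real^3 \<Rightarrow> real^3^3" where
  "inv_metric G p = matrix_inv (G p)"

definition christoffel :: "(real^3 \<Rightarrow> real^3^3) \<Rightarrow> 3 \<Rightarrow> 3 \<Rightarrow> 3 \<Rightarrow> real^3 \<Rightarrow> real" where
  "christoffel G i j k p = (1/2) * (\<Sum>l\<in>UNIV. inv_metric G p $ i $ l *
      (pd (\<lambda>q. G q $ l $ k) j p + pd (\<lambda>q. G q $ l $ j) k p - pd (\<lambda>q. G q $ j $ k) l p))"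

definition cov_div :: "(real^3 \<Rightarrow> real^3^3) \<Rightarrow> (real^3 \<Rightarrow> real^3^3) \<Rightarrow> 3 \<Rightarrow> real^3 \<Rightarrow> real" where
  "cov_div G T j p =
     (\<Sum>i\<in>UNIV. pd (\<lambda>q. T q $ i $ j) i p)
     + (\<Sum>i\<in>UNIV. \<Sum>k\<in>UNIV. christoffel G i i k p * T p $ k $ j)
     + (\<Sum>i\<in>UNIV. \<Sum>k\<in>UNIV. christoffel G j i k p * T p $ i $ k)"

definition K_up :: "(real^3 \<Rightarrow> real^3^3) \<Rightarrow> (real^3 \<Rightarrow> real^3^3) \<Rightarrow> real^3 \<Rightarrow> real^3^3" where
  "K_up G T p = (\<chi> i j. T p $ i $ j
      - (1/2) * (\<Sum>k\<in>UNIV. \<Sum>l\<in>UNIV. G p $ k $ l * T p $ k $ l) * inv_metric G p $ i $ j)"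

definition K_down :: "(real^3 \<Rightarrow> real^3^3) \<Rightarrow> (real^3 \<Rightarrow> real^3^3) \<Rightarrow> real^3 \<Rightarrow> real^3^3" where
  "K_down G T p = (\<chi> i j. \<Sum>k\<in>UNIV. \<Sum>l\<in>UNIV. G p $ i $ k * K_up G T p $ k $ l * G p $ l $ j)"

definition mean_curv :: "(real^3 \<Rightarrow> real^3^3) \<Rightarrow> (real^3 \<Rightarrow> real^3^3) \<Rightarrow> real^3 \<Rightarrow> real" where
  "mean_curv G T p = (\<Sum>i\<in>UNIV. \<Sum>j\<in>UNIV. inv_metric G p $ i $ j * K_down G T p $ i $ j)"

definition T_field :: "real \<Rightarrow> (real^3 \<Rightarrow> real^3^3) \<Rightarrow> real^3 \<Rightarrow> real^3^3" where
  "T_field c G p = (\<chi> i j. c * ((if i = zidx \<and> j = zidx then 1 else 0) - (1/3) * inv_metric G p $ i $ j))"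

end

(*
  Write T = c e_z e_z - (c/3) g^-1, where e_z is the coordinate vector of z. The inverse
  metric is divergence free (metric compatibility), so the divergence of T reduces to the
  Christoffel terms of the constant part: div_j T = c (Gamma^i_iz delta^j_z + Gamma^j_zz).
  Because g_zz = 1 and g_az = beta_a do not depend on z, Gamma^j_zz vanishes, while
  Gamma^i_iz = (1/2) d_z log det g = (1/2) d_z log det h vanishes by the hypothesis on det h.
  For the mean curvature, in dimension three H = g_ij K^ij = -(1/2) g_ij T^ij, and
  g_ij T^ij = c (g_zz - 1) = 0.
*)
theory Submission
  imports Defs
begin

section \<open>Partial derivatives\<close>

lemma pd_has_real_derivative:
  assumes "f differentiable (at p)"
  shows "((\<lambda>t. f (p + t *\<^sub>R axis k 1)) has_real_derivative pd f k p) (at 0)"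
proof -
  have "(f \<circ> (\<lambda>t. p + t *\<^sub>R axis k 1)) differentiable (at 0)"
    by (rule differentiable_chain_at) (auto intro!: derivative_intros assms)
  then show ?thesis
    unfolding pd_def DERIV_deriv_iff_real_differentiable by (simp add: o_def)
qed

lemma pd_eqI:
  assumes "((\<lambda>t. f (p + t *\<^sub>R axis k 1)) has_real_derivative d) (at 0)"
  shows "pd f k p = d"
  unfolding pd_def using assms by (rule DERIV_imp_deriv)

lemma pd_const [simp]: "pd (\<lambda>q. c) k p = 0"
  by (rule pd_eqI) (auto intro!: derivative_eq_intros)

lemma pd_add:
  assumes "f differentiable (at p)" "g differentiable (at p)"
  shows "pd (\<lambda>q. f q + g q) k p = pd f k p + pd g k p"
  by (rule pd_eqI) (auto intro!: derivative_eq_intros pd_has_real_derivative assms)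

lemma pd_diff:
  assumes "f differentiable (at p)" "g differentiable (at p)"
  shows "pd (\<lambda>q. f q - g q) k p = pd f k p - pd g k p"
  by (rule pd_eqI) (auto intro!: derivative_eq_intros pd_has_real_derivative assms)

lemma pd_mult:
  assumes "f differentiable (at p)" "g differentiable (at p)"
  shows "pd (\<lambda>q. f q * g q) k p = pd f k p * g p + f p * pd g k p"
  by (rule pd_eqI) (auto intro!: derivative_eq_intros pd_has_real_derivative assms)

lemma pd_sum:
  fixes f :: "'i::finite \<Rightarrow> real^3 \<Rightarrow> real"
  assumes "\<And>i. f i differentiable (at p)"
  shows "pd (\<lambda>q. \<Sum>i\<in>UNIV. f i q) k p = (\<Sum>i\<in>UNIV. pd (f i) k p)"
  by (rule pd_eqI) (auto intro!: DERIV_sum pd_has_real_derivative assms)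

lemma pd_local:
  assumes "open U" "p \<in> U" "\<And>q. q \<in> U \<Longrightarrow> f q = g q"
  shows "pd f k p = pd g k p"
  unfolding pd_def
proof (rule deriv_cong_ev)
  have "((\<lambda>t::real. p + t *\<^sub>R axis k 1) \<longlongrightarrow> p) (nhds 0)"
    using tendsto_at_iff_tendsto_nhds[of "\<lambda>t::real. p + t *\<^sub>R axis k 1" 0]
    by (auto intro!: tendsto_eq_intros)
  then have "\<forall>\<^sub>F t in nhds 0. p + t *\<^sub>R axis k 1 \<in> U"
    using assms(1,2) by (rule topological_tendstoD)
  then show "\<forall>\<^sub>F t in nhds 0. f (p + t *\<^sub>R axis k 1) = g (p + t *\<^sub>R axis k 1)"
    by eventually_elim (use assms(3) in auto)
qed simp

lemma vec_nth_differentiable: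
  fixes f :: "'b::real_normed_vector \<Rightarrow> 'a::real_normed_vector^'n"
  assumes "f differentiable (at p)"
  shows "(\<lambda>q. f q $ i) differentiable (at p)"
  using differentiable_chain_at[OF assms bounded_linear_imp_differentiable[OF bounded_linear_vec_nth]]
  by (simp add: o_def)

lemma matrix_nth_differentiable:
  fixes f :: "'b::real_normed_vector \<Rightarrow> 'a::real_normed_vector^'n^'m"
  assumes "f differentiable (at p)"
  shows "(\<lambda>q. f q $ i $ j) differentiable (at p)"
  using vec_nth_differentiable[OF vec_nth_differentiable[OF assms]] .

lemma differentiable_at_cong_open:
  assumes "open U" "p \<in> U" "\<And>q. q \<in> U \<Longrightarrow> f q = g q" "f differentiable (at p)"
  shows "g differentiable (at p)"
proof -
  obtain d where "d > 0" "ball p d \<subseteq> U"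
    using assms(1,2) open_contains_ball by blast
  then show ?thesis
    using differentiable_transform_within[OF assms(4), of d]
    by (auto simp: assms(3) dist_commute subset_iff)
qed

section \<open>Matrix identities\<close>

lemma symmetric_matrix_entry:
  assumes "transpose A = A"
  shows "A $ i $ j = A $ j $ i"
  by (metis assms transpose_def vec_lambda_beta)

lemma matrix_inv_inverse:
  fixes A :: "'a::field^'n^'n"
  assumes "invertible A"
  shows "A ** matrix_inv A = mat 1" "matrix_inv A ** A = mat 1"
  using someI_ex[OF assms[unfolded invertible_def]] by (simp_all add: matrix_inv_def)

lemma matrix_inv_unique:
  fixes A B :: "'a::field^'n^'n"
  assumes "A ** B = mat 1"
  shows "matrix_inv A = B"
proof -
  have "invertible A"
    using assms invertible_right_inverse by blast
  have "matrix_inv A = matrix_inv A ** (A ** B)"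
    by (simp add: assms)
  also have "\<dots> = B"
    by (simp add: matrix_mul_assoc matrix_inv_inverse \<open>invertible A\<close>)
  finally show ?thesis .
qed

lemma transpose_matrix_inv_symmetric:
  fixes A :: "'a::field^'n^'n"
  assumes "invertible A" "transpose A = A"
  shows "transpose (matrix_inv A) = matrix_inv A"
proof -
  have "A ** transpose (matrix_inv A) = mat 1"
    by (metis assms matrix_inv_inverse(2) matrix_transpose_mul transpose_mat)
  then show ?thesis
    using matrix_inv_unique by metis
qed

lemma matrix_inverse_variation:
  fixes M G dG dM :: "'a::comm_ring_1^'n^'n"
  assumes "M ** G = mat 1" "dG ** M + G ** dM = 0"
  shows "dM = - (M ** dG ** M)"
proof -
  have "M ** dG ** M + dM = M ** (dG ** M + G ** dM)"
    by (simp add: matrix_add_ldistrib matrix_mul_assoc assms(1))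
  also have "\<dots> = 0"
    by (simp add: assms(2))
  finally show ?thesis
    by (simp add: eq_neg_iff_add_eq_0 add.commute)
qed

lemma trace_mult_symmetric:
  fixes A B :: "'a::comm_semiring_1^'n^'n"
  assumes "transpose A = A"
  shows "trace (A ** B) = (\<Sum>i\<in>UNIV. \<Sum>j\<in>UNIV. A $ i $ j * B $ i $ j)"
  unfolding trace_mul_sym[of A]
  by (simp add: trace_def matrix_matrix_mult_def symmetric_matrix_entry[OF assms] mult.commute)

lemma sum_if_constant_condition:
  "(\<Sum>k\<in>A. if P then f k else 0) = (if P then \<Sum>k\<in>A. f k else 0)"
  by simp

section \<open>Divergence and mean curvature for a general metric\<close>

text \<open>The identity nabla_i g^ij = 0 after substituting d_k g^ij = - g^ia (d_k g_ab) g^bj, for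
  arbitrary symmetric M = g^-1 and dG k = d_k g; in three dimensions it is checked by expansion.\<close>
lemma metric_compatibility_identity:
  fixes M :: "3 \<Rightarrow> 3 \<Rightarrow> real" and dG :: "3 \<Rightarrow> 3 \<Rightarrow> 3 \<Rightarrow> real"
  assumes M: "\<And>i j. M i j = M j i" and dG: "\<And>k i j. dG k i j = dG k j i"
  shows "(\<Sum>i\<in>UNIV. - (\<Sum>a\<in>UNIV. \<Sum>b\<in>UNIV. M i a * dG i a b * M b j))
     + (\<Sum>i\<in>UNIV. \<Sum>k\<in>UNIV. ((1/2) * (\<Sum>l\<in>UNIV. M i l * (dG i l k + dG k l i - dG l i k))) * M k j)
     + (\<Sum>i\<in>UNIV. \<Sum>k\<in>UNIV. ((1/2) * (\<Sum>l\<in>UNIV. M j l * (dG i l k + dG k l i - dG l i k))) * M i k) = 0"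
proof -
  have symmetric_entries: "M 2 1 = M 1 2" "M 3 1 = M 1 3" "M 3 2 = M 2 3"
     "\<And>k. dG k 2 1 = dG k 1 2" "\<And>k. dG k 3 1 = dG k 1 3" "\<And>k. dG k 3 2 = dG k 2 3"
    using M dG by auto
  show ?thesis
    using exhaust_3[of j] by (elim disjE; simp only: sum_3 symmetric_entries; simp add: algebra_simps)
qed

lemma T_field_entry:
  "T_field c G q $ k $ l = (if k = zidx then if l = zidx then c else 0 else 0) - c / 3 * inv_metric G q $ k $ l"
  by (simp add: T_field_def algebra_simps)

locale differentiable_metric_at =
  fixes G :: "real^3 \<Rightarrow> real^3^3" and U :: "(real^3) set" and p :: "real^3"
  assumes open_U: "open U" and p_in_U: "p \<in> U"
    and invertible_metric: "\<And>q. q \<in> U \<Longrightarrow> invertible (G q)"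
    and symmetric_metric: "\<And>q. q \<in> U \<Longrightarrow> transpose (G q) = G q"
    and metric_differentiable: "\<And>i j. (\<lambda>q. G q $ i $ j) differentiable (at p)"
    and inv_metric_differentiable: "\<And>i j. (\<lambda>q. inv_metric G q $ i $ j) differentiable (at p)"
begin

lemma inv_metric_symmetric: "inv_metric G p $ i $ j = inv_metric G p $ j $ i"
  unfolding inv_metric_def
  by (intro symmetric_matrix_entry transpose_matrix_inv_symmetric invertible_metric
      symmetric_metric p_in_U)

lemma pd_metric_symmetric: "pd (\<lambda>q. G q $ i $ j) k p = pd (\<lambda>q. G q $ j $ i) k p"
  by (rule pd_local[OF open_U p_in_U]) (simp add: symmetric_matrix_entry symmetric_metric)

lemma pd_inv_metric:
  "pd (\<lambda>q. inv_metric G q $ i $ j) k p =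
     - (\<Sum>a\<in>UNIV. \<Sum>b\<in>UNIV. inv_metric G p $ i $ a * pd (\<lambda>q. G q $ a $ b) k p * inv_metric G p $ b $ j)"
proof -
  define dG where "dG = (\<chi> a b. pd (\<lambda>q. G q $ a $ b) k p)"
  define dM where "dM = (\<chi> a b. pd (\<lambda>q. inv_metric G q $ a $ b) k p)"
  have "(dG ** inv_metric G p + G p ** dM) $ a $ b = 0" for a b
  proof -
    have product_differentiable:
      "(\<lambda>q. G q $ a $ l * inv_metric G q $ l $ b) differentiable (at p)" for l
      by (intro differentiable_mult metric_differentiable inv_metric_differentiable)
    have "(dG ** inv_metric G p + G p ** dM) $ a $ b = pd (\<lambda>q. (G q ** inv_metric G q) $ a $ b) k p"
      by (simp add: matrix_matrix_mult_def dG_def dM_def pd_sum[OF product_differentiable]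
          pd_mult metric_differentiable inv_metric_differentiable sum.distrib)
    also have "\<dots> = pd (\<lambda>q. mat 1 $ a $ b) k p"
      by (rule pd_local[OF open_U p_in_U])
        (simp add: inv_metric_def matrix_inv_inverse invertible_metric)
    finally show ?thesis
      by simp
  qed
  then have "dM = - (inv_metric G p ** dG ** inv_metric G p)"
    by (intro matrix_inverse_variation[where G = "G p"])
      (simp_all add: vec_eq_iff inv_metric_def matrix_inv_inverse invertible_metric p_in_U)
  then have "dM $ i $ j =
      - (\<Sum>b\<in>UNIV. \<Sum>a\<in>UNIV. inv_metric G p $ i $ a * dG $ a $ b * inv_metric G p $ b $ j)"
    by (simp add: matrix_matrix_mult_def sum_distrib_right)
  also have "\<dots> = - (\<Sum>a\<in>UNIV. \<Sum>b\<in>UNIV. inv_metric G p $ i $ a * dG $ a $ b * inv_metric G p $ b $ j)"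
    by (subst sum.swap) (rule refl)
  finally show ?thesis
    by (simp add: dM_def dG_def)
qed

lemma christoffel_contracted:
  "(\<Sum>i\<in>UNIV. christoffel G i i k p) =
     1/2 * (\<Sum>i\<in>UNIV. \<Sum>l\<in>UNIV. inv_metric G p $ i $ l * pd (\<lambda>q. G q $ l $ i) k p)"
proof -
  have "(\<Sum>i\<in>UNIV. \<Sum>l\<in>UNIV. inv_metric G p $ i $ l * pd (\<lambda>q. G q $ l $ k) i p)
      = (\<Sum>i\<in>UNIV. \<Sum>l\<in>UNIV. inv_metric G p $ i $ l * pd (\<lambda>q. G q $ i $ k) l p)"
    by (subst sum.swap) (simp add: inv_metric_symmetric)
  moreover have "(\<Sum>i\<in>UNIV. christoffel G i i k p) =
      1/2 * ((\<Sum>i\<in>UNIV. \<Sum>l\<in>UNIV. inv_metric G p $ i $ l * pd (\<lambda>q. G q $ l $ k) i p)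
           + (\<Sum>i\<in>UNIV. \<Sum>l\<in>UNIV. inv_metric G p $ i $ l * pd (\<lambda>q. G q $ l $ i) k p)
           - (\<Sum>i\<in>UNIV. \<Sum>l\<in>UNIV. inv_metric G p $ i $ l * pd (\<lambda>q. G q $ i $ k) l p))"
    by (simp add: christoffel_def sum_distrib_left ring_distribs sum.distrib sum_subtractf)
  ultimately show ?thesis
    by simp
qed

lemma cov_div_inv_metric: "cov_div G (inv_metric G) j p = 0"
  unfolding cov_div_def pd_inv_metric christoffel_def
  by (rule metric_compatibility_identity[where M = "\<lambda>i j. inv_metric G p $ i $ j"
        and dG = "\<lambda>k i j. pd (\<lambda>q. G q $ i $ j) k p", OF inv_metric_symmetric pd_metric_symmetric])

lemma pd_T_field:
  "pd (\<lambda>q. T_field c G q $ i $ j) k p = - (c / 3) * pd (\<lambda>q. inv_metric G q $ i $ j) k p"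
  unfolding T_field_entry
  by (rule pd_eqI) (auto intro!: derivative_eq_intros pd_has_real_derivative inv_metric_differentiable)

lemma cov_div_T_field:
  "cov_div G (T_field c G) j p =
     c * ((if j = zidx then (\<Sum>i\<in>UNIV. christoffel G i i zidx p) else 0) + christoffel G j zidx zidx p)"
proof -
  have "(\<Sum>i\<in>UNIV. pd (\<lambda>q. T_field c G q $ i $ j) i p)
      = - (c / 3) * (\<Sum>i\<in>UNIV. pd (\<lambda>q. inv_metric G q $ i $ j) i p)"
    by (simp add: pd_T_field sum_distrib_left)
  moreover have "(\<Sum>i\<in>UNIV. \<Sum>k\<in>UNIV. christoffel G i i k p * T_field c G p $ k $ j)
      = c * (if j = zidx then (\<Sum>i\<in>UNIV. christoffel G i i zidx p) else 0)
        - (c / 3) * (\<Sum>i\<in>UNIV. \<Sum>k\<in>UNIV. christoffel G i i k p * inv_metric G p $ k $ j)"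
    by (simp add: T_field_entry right_diff_distrib sum_subtractf sum_distrib_left mult_ac
        if_distrib[of "\<lambda>x. _ * x"] cong: if_cong)
  moreover have "(\<Sum>i\<in>UNIV. \<Sum>k\<in>UNIV. christoffel G j i k p * T_field c G p $ i $ k)
      = c * christoffel G j zidx zidx p
        - (c / 3) * (\<Sum>i\<in>UNIV. \<Sum>k\<in>UNIV. christoffel G j i k p * inv_metric G p $ i $ k)"
    by (simp add: T_field_entry right_diff_distrib sum_subtractf sum_distrib_left mult_ac
        if_distrib[of "\<lambda>x. _ * x"] sum_if_constant_condition cong: if_cong)
  ultimately have "cov_div G (T_field c G) j p =
      c * ((if j = zidx then (\<Sum>i\<in>UNIV. christoffel G i i zidx p) else 0) + christoffel G j zidx zidx p)
      - (c / 3) * cov_div G (inv_metric G) j p"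
    by (simp add: cov_div_def algebra_simps)
  then show ?thesis
    by (simp add: cov_div_inv_metric)
qed

end

lemma christoffel_vertical_eq_0:
  assumes "\<And>l. pd (\<lambda>q. G q $ l $ zidx) zidx p = 0" "\<And>l. pd (\<lambda>q. G q $ zidx $ zidx) l p = 0"
  shows "christoffel G j zidx zidx p = 0"
  by (simp add: christoffel_def assms)

definition metric_trace ::
    "(real^3 \<Rightarrow> real^3^3) \<Rightarrow> (real^3 \<Rightarrow> real^3^3) \<Rightarrow> real^3 \<Rightarrow> real" where
  "metric_trace G T p = (\<Sum>k\<in>UNIV. \<Sum>l\<in>UNIV. G p $ k $ l * T p $ k $ l)"

lemma metric_trace_inv_metric:
  assumes "invertible (G p)" "transpose (G p) = G p"
  shows "metric_trace G (inv_metric G) p = 3"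
proof -
  have "metric_trace G (inv_metric G) p = trace (G p ** inv_metric G p)"
    by (simp add: metric_trace_def trace_mult_symmetric assms(2))
  also have "\<dots> = 3"
    by (simp add: inv_metric_def matrix_inv_inverse assms(1) trace_I)
  finally show ?thesis .
qed

lemma metric_trace_K_up:
  "metric_trace G (K_up G T) p =
     metric_trace G T p - 1/2 * metric_trace G T p * metric_trace G (inv_metric G) p"
proof -
  have "metric_trace G (K_up G T) p = (\<Sum>k\<in>UNIV. \<Sum>l\<in>UNIV. G p $ k $ l * T p $ k $ l
      - (1/2 * metric_trace G T p) * (G p $ k $ l * inv_metric G p $ k $ l))"
    by (simp add: metric_trace_def K_up_def algebra_simps)
  then show ?thesis
    by (simp only: metric_trace_def sum_subtractf flip: sum_distrib_left)
qed

lemma K_down_eq_matrix_product: "K_down G T p = G p ** K_up G T p ** G p"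
  unfolding vec_eq_iff K_down_def matrix_matrix_mult_def
  by (simp add: sum_distrib_right) (subst sum.swap, simp)

lemma mean_curv_eq_metric_trace:
  assumes "invertible (G p)" "transpose (G p) = G p"
  shows "mean_curv G T p = - 1/2 * metric_trace G T p"
proof -
  have G_inv: "G p ** inv_metric G p = mat 1"
    by (simp add: inv_metric_def matrix_inv_inverse assms(1))
  have "mean_curv G T p = trace (inv_metric G p ** (G p ** K_up G T p ** G p))"
    unfolding inv_metric_def trace_mult_symmetric[OF transpose_matrix_inv_symmetric[OF assms]]
    by (simp add: mean_curv_def inv_metric_def K_down_eq_matrix_product)
  also have "\<dots> = trace (G p ** K_up G T p ** (G p ** inv_metric G p))"
    by (subst trace_mul_sym) (simp only: matrix_mul_assoc)
  also have "\<dots> = metric_trace G (K_up G T) p"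
    by (simp add: G_inv metric_trace_def trace_mult_symmetric assms(2))
  also have "\<dots> = - 1/2 * metric_trace G T p"
    by (simp add: metric_trace_K_up metric_trace_inv_metric assms)
  finally show ?thesis .
qed

lemma metric_trace_T_field:
  assumes "invertible (G p)" "transpose (G p) = G p" "G p $ zidx $ zidx = 1"
  shows "metric_trace G (T_field c G) p = 0"
proof -
  have "metric_trace G (T_field c G) p = c * G p $ zidx $ zidx - c / 3 * metric_trace G (inv_metric G) p"
    by (simp add: metric_trace_def T_field_entry right_diff_distrib sum_subtractf sum_distrib_left
        mult_ac if_distrib[of "\<lambda>x. _ * x"] sum_if_constant_condition cong: if_cong)
  then show ?thesis
    by (simp add: metric_trace_inv_metric assms)
qed

section \<open>The Kaluza--Klein metric\<close>

lemma kk_metric_entries: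
  "kk_metric h \<beta> q $ 1 $ 1 = \<beta> q $ 1 * \<beta> q $ 1 + h q $ 1 $ 1"
  "kk_metric h \<beta> q $ 1 $ 2 = \<beta> q $ 1 * \<beta> q $ 2 + h q $ 1 $ 2"
  "kk_metric h \<beta> q $ 2 $ 1 = \<beta> q $ 2 * \<beta> q $ 1 + h q $ 2 $ 1"
  "kk_metric h \<beta> q $ 2 $ 2 = \<beta> q $ 2 * \<beta> q $ 2 + h q $ 2 $ 2"
  "kk_metric h \<beta> q $ 1 $ 3 = \<beta> q $ 1"
  "kk_metric h \<beta> q $ 2 $ 3 = \<beta> q $ 2"
  "kk_metric h \<beta> q $ 3 $ 1 = \<beta> q $ 1"
  "kk_metric h \<beta> q $ 3 $ 2 = \<beta> q $ 2"
  "kk_metric h \<beta> q $ 3 $ 3 = 1"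
  by (simp_all add: kk_metric_def zidx_def idx2_def)

lemma kk_metric_symmetric:
  assumes "transpose (h q) = h q"
  shows "transpose (kk_metric h \<beta> q) = kk_metric h \<beta> q"
  by (simp add: vec_eq_iff transpose_def kk_metric_def symmetric_matrix_entry[OF assms] mult.commute
      conj_commute)

lemma det2_pos_if_positive_definite:
  fixes A :: "real^2^2"
  assumes "transpose A = A" and pos: "\<And>v. v \<noteq> 0 \<Longrightarrow> v \<bullet> (A *v v) > 0"
  shows "det A > 0"
proof -
  have A21: "A $ 2 $ 1 = A $ 1 $ 2"
    by (rule symmetric_matrix_entry[OF assms(1)])
  have "vector [1, 0] \<bullet> (A *v vector [1, 0]) > (0::real)"
    by (rule pos) (simp add: vec_eq_iff forall_2)
  then have a: "A $ 1 $ 1 > 0"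
    by (simp add: inner_vec_def matrix_vector_mult_def sum_2)
  have "vector [A $ 1 $ 2, - A $ 1 $ 1] \<bullet> (A *v vector [A $ 1 $ 2, - A $ 1 $ 1]) > (0::real)"
    by (rule pos) (use a in \<open>simp add: vec_eq_iff forall_2\<close>)
  then have "A $ 1 $ 1 * det A > 0"
    by (simp add: inner_vec_def matrix_vector_mult_def sum_2 det_2 A21 algebra_simps)
  then show ?thesis
    using a by (simp add: zero_less_mult_iff)
qed

definition inverse2 :: "real^2^2 \<Rightarrow> real^2^2" where
  "inverse2 A = (1 / det A) *\<^sub>R vector [vector [A$2$2, - A$1$2], vector [- A$2$1, A$1$1]]"

lemma inverse2_entries:
  "inverse2 A $ 1 $ 1 = A$2$2 / det A" "inverse2 A $ 1 $ 2 = - A$1$2 / det A"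
  "inverse2 A $ 2 $ 1 = - A$2$1 / det A" "inverse2 A $ 2 $ 2 = A$1$1 / det A"
  by (simp_all add: inverse2_def)

definition kk_inverse :: "real^2^2 \<Rightarrow> real^2 \<Rightarrow> real^3^3" where
  "kk_inverse H B = (\<chi> i j.
     if i = zidx \<and> j = zidx then 1 + B \<bullet> (inverse2 H *v B)
     else if i = zidx then - (B v* inverse2 H) $ idx2 j
     else if j = zidx then - (inverse2 H *v B) $ idx2 i
     else inverse2 H $ idx2 i $ idx2 j)"

lemma kk_inverse_entries:
  fixes H :: "real^2^2" and B :: "real^2"
  defines "Hi \<equiv> inverse2 H"
  shows
    "kk_inverse H B $ 1 $ 1 = Hi$1$1" "kk_inverse H B $ 1 $ 2 = Hi$1$2"
    "kk_inverse H B $ 2 $ 1 = Hi$2$1" "kk_inverse H B $ 2 $ 2 = Hi$2$2"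
    "kk_inverse H B $ 1 $ 3 = - (Hi$1$1 * B$1 + Hi$1$2 * B$2)"
    "kk_inverse H B $ 2 $ 3 = - (Hi$2$1 * B$1 + Hi$2$2 * B$2)"
    "kk_inverse H B $ 3 $ 1 = - (B$1 * Hi$1$1 + B$2 * Hi$2$1)"
    "kk_inverse H B $ 3 $ 2 = - (B$1 * Hi$1$2 + B$2 * Hi$2$2)"
    "kk_inverse H B $ 3 $ 3 = 1 + B$1 * (Hi$1$1 * B$1 + Hi$1$2 * B$2) + B$2 * (Hi$2$1 * B$1 + Hi$2$2 * B$2)"
  by (simp_all add: kk_inverse_def Hi_def zidx_def idx2_def inner_vec_def matrix_vector_mult_def
      vector_matrix_mult_def sum_2)

lemma kk_metric_mult_kk_inverse:
  assumes "det (h q) \<noteq> 0"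
  shows "kk_metric h \<beta> q ** kk_inverse (h q) (\<beta> q) = mat 1"
  using assms
  unfolding vec_eq_iff forall_3 matrix_matrix_mult_def sum_3 mat_def
  by (simp add: kk_metric_entries kk_inverse_entries inverse2_entries field_simps) (simp add: det_2 algebra_simps)

lemma kk_metric_differentiable:
  assumes "h differentiable (at p)" "\<beta> differentiable (at p)"
  shows "(\<lambda>q. kk_metric h \<beta> q $ i $ j) differentiable (at p)"
proof -
  have "(\<lambda>q. h q $ a $ b) differentiable (at p)" "(\<lambda>q. \<beta> q $ a) differentiable (at p)" for a b
    by (intro matrix_nth_differentiable vec_nth_differentiable assms)+
  then show ?thesis
    using exhaust_3[of i] exhaust_3[of j]
    by (elim disjE; simp only: kk_metric_entries; intro derivative_intros)
qed

lemma kk_inverse_differentiable: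
  fixes h :: "real^3 \<Rightarrow> real^2^2" and \<beta> :: "real^3 \<Rightarrow> real^2"
  assumes "h differentiable (at p)" "\<beta> differentiable (at p)" "det (h p) \<noteq> 0"
  shows "(\<lambda>q. kk_inverse (h q) (\<beta> q) $ i $ j) differentiable (at p)"
proof -
  have "(\<lambda>q. h q $ a $ b) differentiable (at p)" "(\<lambda>q. \<beta> q $ a) differentiable (at p)" for a b
    by (intro matrix_nth_differentiable vec_nth_differentiable assms)+
  moreover have "h p $ 1 $ 1 * h p $ 2 $ 2 - h p $ 1 $ 2 * h p $ 2 $ 1 \<noteq> 0"
    using assms(3) by (simp add: det_2)
  ultimately show ?thesis
    using exhaust_3[of i] exhaust_3[of j]
    by (elim disjE; simp only: kk_inverse_entries inverse2_entries det_2; intro derivative_intros)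
qed

lemma kk_metric_inverse:
  assumes "det (h q) \<noteq> 0"
  shows "invertible (kk_metric h \<beta> q)" "inv_metric (kk_metric h \<beta>) q = kk_inverse (h q) (\<beta> q)"
  using kk_metric_mult_kk_inverse[of h q \<beta>, OF assms] invertible_right_inverse matrix_inv_unique
  unfolding inv_metric_def by blast+

lemma differentiable_metric_at_kk_metric:
  fixes h :: "real^3 \<Rightarrow> real^2^2" and \<beta> :: "real^3 \<Rightarrow> real^2"
  assumes "open U" "p \<in> U"
    and "\<And>q. q \<in> U \<Longrightarrow> transpose (h q) = h q"
    and "\<And>q. q \<in> U \<Longrightarrow> det (h q) \<noteq> 0"
    and "h differentiable (at p)" "\<beta> differentiable (at p)"
  shows "differentiable_metric_at (kk_metric h \<beta>) U p"
proof
  show "(\<lambda>q. inv_metric (kk_metric h \<beta>) q $ i $ j) differentiable (at p)" for i j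
    by (rule differentiable_at_cong_open[OF assms(1,2), of "\<lambda>q. kk_inverse (h q) (\<beta> q) $ i $ j"])
      (simp_all add: kk_metric_inverse kk_inverse_differentiable assms)
qed (simp_all add: assms kk_metric_inverse kk_metric_symmetric kk_metric_differentiable)

lemma kk_metric_pd_vertical:
  assumes "\<And>a. pd (\<lambda>q. \<beta> q $ a) zidx p = 0"
  shows "pd (\<lambda>q. kk_metric h \<beta> q $ l $ zidx) zidx p = 0"
    and "pd (\<lambda>q. kk_metric h \<beta> q $ zidx $ l) zidx p = 0"
  using exhaust_3[of l] assms by (auto simp: kk_metric_entries zidx_def)

lemma kk_trace_pd_vertical:
  fixes h :: "real^3 \<Rightarrow> real^2^2" and \<beta> :: "real^3 \<Rightarrow> real^2"
  assumes "h differentiable (at p)" "\<beta> differentiable (at p)"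
    and \<beta>_vertical: "\<And>a. pd (\<lambda>q. \<beta> q $ a) zidx p = 0"
  shows "(\<Sum>i\<in>UNIV. \<Sum>l\<in>UNIV.
            kk_inverse (h p) (\<beta> p) $ i $ l * pd (\<lambda>q. kk_metric h \<beta> q $ l $ i) zidx p)
    = pd (\<lambda>q. det (h q)) zidx p / det (h p)"
proof -
  have h_entry: "(\<lambda>q. h q $ a $ b) differentiable (at p)"
    and \<beta>_entry: "(\<lambda>q. \<beta> q $ a) differentiable (at p)" for a b
    by (intro matrix_nth_differentiable vec_nth_differentiable assms)+
  define dh where "dh a b = pd (\<lambda>q. h q $ a $ b) zidx p" for a b
  have "pd (\<lambda>q. \<beta> q $ a * \<beta> q $ b + h q $ a $ b) zidx p = dh a b" for a b
    by (simp add: dh_def pd_add pd_mult differentiable_mult h_entry \<beta>_entry \<beta>_vertical)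
  then have block: "pd (\<lambda>q. kk_metric h \<beta> q $ 1 $ 1) zidx p = dh 1 1"
    "pd (\<lambda>q. kk_metric h \<beta> q $ 1 $ 2) zidx p = dh 1 2"
    "pd (\<lambda>q. kk_metric h \<beta> q $ 2 $ 1) zidx p = dh 2 1"
    "pd (\<lambda>q. kk_metric h \<beta> q $ 2 $ 2) zidx p = dh 2 2"
    by (simp_all only: kk_metric_entries)
  have vertical: "pd (\<lambda>q. kk_metric h \<beta> q $ l $ 3) zidx p = 0"
    "pd (\<lambda>q. kk_metric h \<beta> q $ 3 $ l) zidx p = 0" for l
    using kk_metric_pd_vertical[OF \<beta>_vertical] by (simp_all add: zidx_def)
  have "pd (\<lambda>q. det (h q)) zidx p
      = dh 1 1 * h p $ 2 $ 2 + h p $ 1 $ 1 * dh 2 2 - dh 1 2 * h p $ 2 $ 1 - h p $ 1 $ 2 * dh 2 1"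
    by (simp add: det_2 dh_def pd_diff pd_mult differentiable_mult h_entry)
  then show ?thesis
    by (simp add: sum_3 block vertical kk_inverse_entries inverse2_entries divide_simps)
qed

theorem corollary3p2:
  fixes U :: "(real^3) set"
    and h :: "real^3 \<Rightarrow> real^2^2"
    and \<beta> :: "real^3 \<Rightarrow> real^2"
    and c :: real
  assumes "open U"
    and "h differentiable_on U"
    and "\<beta> differentiable_on U"
    and "\<forall>p\<in>U. transpose (h p) = h p"
    and "\<forall>p\<in>U. \<forall>v::real^2. v \<noteq> 0 \<longrightarrow> v \<bullet> (h p *v v) > 0"
    and "\<forall>p\<in>U. pd (\<lambda>q. det (h q)) zidx p = 0"
    and "\<forall>p\<in>U. \<forall>a. pd (\<lambda>q. \<beta> q $ a) zidx p = 0"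
  shows "\<forall>p\<in>U.
           (\<forall>j. cov_div (kk_metric h \<beta>) (T_field c (kk_metric h \<beta>)) j p = 0)
         \<and> mean_curv (kk_metric h \<beta>) (T_field c (kk_metric h \<beta>)) p = 0"
proof
  fix p assume p: "p \<in> U"
  let ?G = "kk_metric h \<beta>"
  have h_symmetric: "transpose (h q) = h q" if "q \<in> U" for q
    using assms(4) that by blast
  have det_h: "det (h q) \<noteq> 0" if "q \<in> U" for q
    using det2_pos_if_positive_definite[OF h_symmetric[OF that]] assms(5) that by force
  have h_diff: "h differentiable (at p)" and \<beta>_diff: "\<beta> differentiable (at p)"
    using assms(1-3) p differentiable_on_eq_differentiable_at by blast+
  have \<beta>_vertical: "pd (\<lambda>q. \<beta> q $ a) zidx p = 0" for a
    using assms(7) p by blast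
  interpret differentiable_metric_at ?G U p
    using differentiable_metric_at_kk_metric assms(1) p h_symmetric det_h h_diff \<beta>_diff by blast
  have "christoffel ?G j zidx zidx p = 0" for j
    by (rule christoffel_vertical_eq_0[OF kk_metric_pd_vertical(1)[OF \<beta>_vertical]])
      (simp add: kk_metric_entries zidx_def)
  moreover have "(\<Sum>i\<in>UNIV. christoffel ?G i i zidx p) = 0"
    using christoffel_contracted[of zidx] kk_trace_pd_vertical[OF h_diff \<beta>_diff \<beta>_vertical] assms(6) p
    by (simp add: kk_metric_inverse det_h)
  ultimately have "cov_div ?G (T_field c ?G) j p = 0" for j
    by (simp add: cov_div_T_field)
  moreover have "mean_curv ?G (T_field c ?G) p = 0"
    using mean_curv_eq_metric_trace metric_trace_T_field invertible_metric symmetric_metric p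
    by (simp add: kk_metric_entries zidx_def)
  ultimately show "(\<forall>j. cov_div ?G (T_field c ?G) j p = 0) \<and> mean_curv ?G (T_field c ?G) p = 0"
    by blast
qed

end
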